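(* Let $0<\mathcal{R}_0\le1$ and let $F$ be a convex, nonnegative, differentiable function on $\{x'\in\mathbb{R}^{n-1}:|x'|\le\mathcal{R}_0\}$ with $F(0)=0$. For $r\in(0,\mathcal{R}_0)$ define $$\delta(r)=\max_{|x'|\le r}\frac{F(x')}{|x'|},\qquad \delta_1(r)=\max_{|x'|\le r}|\nabla F(x')|.$$ Then: (a) $\delta_1(r)\to0$ as $r\to0$ if and only if $\delta(r)\to0$ as $r\to0$; (b) $\delta_1$ satisfies the Dini condition at zero if and only if $\delta$ satisfies the Dini condition at zero.
   Context: Class $\mathcal{D}_1$: a function $\sigma:[0,1]\to\mathbb{R}_+$ belongs to $\mathcal{D}_1$ if - $\sigma$ is increasing, $\sigma(0)=0$ and $\sigma(1)=1$; - $\sigma(t)/t$ is summable on $(0,1)$ and decreasing. A function $\zeta$ satisfies the Dini condition at zero if $|\zeta(r)|\le C\sigma(r)$ (for small $r>0$) for some constant $C$ and some $\sigma\in\mathcal{D}_1$. *)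

theory Defs
  imports "HOL-Analysis.Analysis"
begin

definition class_D1 :: "(real \<Rightarrow> real) set" where
  "class_D1 = {\<sigma>. (\<forall>t\<in>{0..1}. 0 \<le> \<sigma> t)
      \<and> mono_on {0..1} \<sigma>
      \<and> \<sigma> 0 = 0 \<and> \<sigma> 1 = 1
      \<and> (\<lambda>t. \<sigma> t / t) integrable_on {0<..<1}
      \<and> (\<forall>s t. 0 < s \<and> s \<le> t \<and> t \<le> 1 \<longrightarrow> \<sigma> t / t \<le> \<sigma> s / s)}"

definition dini_at_zero :: "(real \<Rightarrow> real) \<Rightarrow> bool" where
  "dini_at_zero \<zeta> \<longleftrightarrow>
     (\<exists>C \<sigma>. \<sigma> \<in> class_D1 \<and> (\<forall>\<^sub>F r in at_right 0. \<bar>\<zeta> r\<bar> \<le> C * \<sigma> r))"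

definition delta :: "('a::euclidean_space \<Rightarrow> real) \<Rightarrow> real \<Rightarrow> real" where
  "delta F r = Sup {F x / norm x | x. 0 < norm x \<and> norm x \<le> r}"

definition delta1 :: "('a::euclidean_space \<Rightarrow> real) \<Rightarrow> real \<Rightarrow> real" where
  "delta1 F r = Sup {norm D | x D. norm x \<le> r \<and> (F has_derivative (\<lambda>h. D \<bullet> h)) (at x)}"

end

theory Submission
  imports Defs
begin

text \<open>Both quantities are controlled by the supporting hyperplanes of \<open>F\<close>. At \<open>x\<close> with gradient
  \<open>D\<close>, the inequality \<open>F 0 \<ge> F x - D \<bullet> x\<close> gives \<open>F x / |x| \<le> |D|\<close>, so \<open>\<delta> \<le> \<delta>\<^sub>1\<close>; stepping from
  \<open>x\<close> a distance \<open>r\<close> in the direction of \<open>D\<close> and using \<open>F \<ge> 0\<close> gives \<open>r |D| \<le> F y \<le> 2r \<delta>(2r)\<close>, so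
  \<open>\<delta>\<^sub>1(r) \<le> 2 \<delta>(2r)\<close>. Both assertions then follow from \<open>\<delta> \<le> \<delta>\<^sub>1 \<le> 2 \<delta>(2\<cdot>)\<close>, the Dini part
  because \<open>\<sigma>(t)/t\<close> decreasing gives \<open>\<sigma>(2r) \<le> 2 \<sigma>(r)\<close>.\<close>

lemma convex_on_gradient_inequality:
  fixes F :: "'a::real_inner \<Rightarrow> real"
  assumes cv: "convex_on S F" and x: "x \<in> S" and y: "y \<in> S"
    and deriv: "(F has_derivative (\<lambda>h. D \<bullet> h)) (at x)"
  shows "D \<bullet> (y - x) \<le> F y - F x"
proof -
  define g where "g t = F (x + t *\<^sub>R (y - x))" for t :: real
  have line: "((\<lambda>t. x + t *\<^sub>R (y - x)) has_derivative (\<lambda>t. t *\<^sub>R (y - x))) (at 0)"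
    by (auto intro!: derivative_eq_intros)
  have "(F has_derivative (\<lambda>h. D \<bullet> h)) (at (x + 0 *\<^sub>R (y - x)))" using deriv by simp
  then have "(g has_derivative (\<lambda>t. D \<bullet> (t *\<^sub>R (y - x)))) (at 0)"
    unfolding g_def by (rule has_derivative_compose[OF line])
  then have "(g has_field_derivative (D \<bullet> (y - x))) (at 0)"
    by (simp add: has_field_derivative_def mult_commute_abs)
  then have "((\<lambda>t. (g t - g 0) / (t - 0)) \<longlongrightarrow> D \<bullet> (y - x)) (at_right 0)"
    using has_field_derivative_iff filterlim_at_split by blast
  moreover have "\<forall>\<^sub>F t in at_right 0. (g t - g 0) / (t - 0) \<le> F y - F x"
    using eventually_at_right_real[OF zero_less_one]
  proof (rule eventually_mono)
    fix t :: real assume t: "t \<in> {0<..<1}"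
    have "g t = F ((1 - t) *\<^sub>R x + t *\<^sub>R y)" unfolding g_def by (simp add: algebra_simps)
    also have "\<dots> \<le> (1 - t) * F x + t * F y" using convex_onD[OF cv, of t x y] t x y by auto
    finally have "g t - g 0 \<le> t * (F y - F x)" by (simp add: g_def algebra_simps)
    then show "(g t - g 0) / (t - 0) \<le> F y - F x" using t by (simp add: field_simps)
  qed
  ultimately show ?thesis by (rule tendsto_upperbound) simp
qed

lemma has_derivative_inner_representation:
  fixes F :: "'a::euclidean_space \<Rightarrow> real"
  assumes "(F has_derivative F') (at x)"
  shows "\<exists>D. (F has_derivative (\<lambda>h. D \<bullet> h)) (at x)"
proof -
  have "linear F'" using assms has_derivative_linear by blast
  then have "F' = (\<lambda>h. adjoint F' 1 \<bullet> h)" by (simp add: adjoint_clauses)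
  then show ?thesis using assms by metis
qed

locale nonneg_convex_on_cball =
  fixes F :: "'a::euclidean_space \<Rightarrow> real" and R0 :: real
  assumes R0_pos: "0 < R0"
    and convex: "convex_on (cball 0 R0) F"
    and nonneg: "\<forall>x\<in>cball 0 R0. 0 \<le> F x"
    and differentiable: "F differentiable_on cball 0 R0"
    and F_0: "F 0 = 0"
begin

lemma bdd_above_quotients: "bdd_above {F x / norm x | x. 0 < norm x \<and> norm x \<le> s}"
  if "s \<le> R0"
proof -
  have "compact (F ` cball 0 R0)"
    using compact_continuous_image[OF differentiable_imp_continuous_on[OF differentiable]] by simp
  then obtain M where M: "\<And>x. x \<in> cball 0 R0 \<Longrightarrow> F x \<le> M"
    using compact_imp_bounded bounded_real by (metis abs_le_D1 imageI)
  have "F x / norm x \<le> M / R0" if x: "0 < norm x" "norm x \<le> R0" for x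
  proof -
    define t where "t = norm x / R0"
    define y where "y = (R0 / norm x) *\<^sub>R x"
    have t: "0 \<le> t" "t \<le> 1" using x R0_pos by (auto simp: t_def field_simps)
    have y: "norm y = R0" using x R0_pos by (simp add: y_def)
    have "x = (1 - t) *\<^sub>R 0 + t *\<^sub>R y" using x R0_pos by (simp add: y_def t_def)
    then have "F x \<le> (1 - t) * F 0 + t * F y"
      using convex_onD[OF convex t, of 0 y] R0_pos y by simp
    also have "\<dots> \<le> t * M" using F_0 M[of y] y t by (simp add: mult_left_mono)
    finally show ?thesis using x R0_pos by (simp add: t_def field_simps)
  qed
  then show ?thesis using that by (intro bdd_aboveI[of _ "M / R0"]) auto
qed

lemma has_gradient: "\<exists>D. (F has_derivative (\<lambda>h. D \<bullet> h)) (at x)" if "norm x < R0"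
proof -
  have x: "x \<in> interior (cball 0 R0)" using that by simp
  then have "F differentiable (at x within cball 0 R0)"
    using differentiable interior_subset by (meson differentiable_on_def subsetD)
  then have "F differentiable (at x)" using at_within_interior[OF x] by simp
  then show ?thesis using has_derivative_inner_representation by (auto simp: differentiable_def)
qed

lemma le_delta_mult_norm: "F y \<le> delta F s * norm y" if "norm y \<le> s" "s \<le> R0"
proof (cases "y = 0")
  case True
  then show ?thesis using F_0 by simp
next
  case False
  then have "F y / norm y \<le> delta F s"
    unfolding delta_def using that by (intro cSup_upper bdd_above_quotients) auto
  then show ?thesis using False by (simp add: field_simps)
qed

lemma delta_nonneg: "0 \<le> delta F s" if "0 < s" "s \<le> R0"
proof -
  obtain b :: 'a where b: "b \<in> Basis" using nonempty_Basis by blast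
  have "0 \<le> F (s *\<^sub>R b)" using nonneg that b by auto
  also have "\<dots> \<le> delta F s * norm (s *\<^sub>R b)" using that b by (intro le_delta_mult_norm) auto
  finally show ?thesis using that b by (simp add: zero_le_mult_iff)
qed

lemma gradient_norm_le_delta:
  assumes r: "0 < r" "2 * r \<le> R0" and x: "norm x \<le> r"
    and deriv: "(F has_derivative (\<lambda>h. D \<bullet> h)) (at x)"
  shows "norm D \<le> 2 * delta F (2 * r)"
proof (cases "D = 0")
  case True
  then show ?thesis using delta_nonneg r by simp
next
  case False
  define y where "y = x + (r / norm D) *\<^sub>R D"
  have "norm y \<le> norm x + norm ((r / norm D) *\<^sub>R D)"
    unfolding y_def by (rule norm_triangle_ineq)
  then have y: "norm y \<le> 2 * r" using False r x by simp
  have "r * norm D = D \<bullet> (y - x)"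
    using False by (simp add: y_def power2_norm_eq_inner[symmetric] power2_eq_square)
  also have "\<dots> \<le> F y - F x"
    using y x r by (intro convex_on_gradient_inequality[OF convex _ _ deriv]) auto
  also have "\<dots> \<le> F y" using nonneg x r by auto
  also have "\<dots> \<le> delta F (2 * r) * norm y" using y r by (intro le_delta_mult_norm) auto
  also have "\<dots> \<le> delta F (2 * r) * (2 * r)"
    using y delta_nonneg r by (simp add: mult_left_mono)
  finally show ?thesis using r by (simp add: algebra_simps)
qed

lemma delta1_le_delta: "delta1 F r \<le> 2 * delta F (2 * r)" if r: "0 < r" "2 * r \<le> R0"
  unfolding delta1_def
proof (rule cSup_least)
  obtain D where "(F has_derivative (\<lambda>h. D \<bullet> h)) (at 0)" using has_gradient[of 0] R0_pos by auto
  then show "{norm D |x D. norm x \<le> r \<and> (F has_derivative (\<bullet>) D) (at x)} \<noteq> {}"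
    using r by fastforce
qed (use gradient_norm_le_delta r in auto)

lemma delta_le_delta1: "delta F r \<le> delta1 F r" if r: "0 < r" "2 * r \<le> R0"
  unfolding delta_def
proof (rule cSup_least)
  obtain b :: 'a where "b \<in> Basis" using nonempty_Basis by blast
  then show "{F x / norm x |x. 0 < norm x \<and> norm x \<le> r} \<noteq> {}"
    using r by (auto intro!: exI[of _ "r *\<^sub>R b"])
next
  fix e assume "e \<in> {F x / norm x |x. 0 < norm x \<and> norm x \<le> r}"
  then obtain x where x: "e = F x / norm x" "0 < norm x" "norm x \<le> r" by blast
  obtain D where D: "(F has_derivative (\<lambda>h. D \<bullet> h)) (at x)" using has_gradient[of x] x r by auto
  have "D \<bullet> (0 - x) \<le> F 0 - F x"
    using x r by (intro convex_on_gradient_inequality[OF convex _ _ D]) auto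
  then have "F x \<le> D \<bullet> x" using F_0 by (simp add: inner_diff_right)
  also have "\<dots> \<le> norm D * norm x" by (rule norm_cauchy_schwarz)
  finally have "e \<le> norm D" using x by (simp add: divide_le_eq)
  also have "norm D \<le> delta1 F r"
    unfolding delta1_def using x D gradient_norm_le_delta[OF r] r
    by (intro cSup_upper bdd_aboveI[of _ "2 * delta F (2 * r)"]) auto
  finally show "e \<le> delta1 F r" .
qed

end

lemma filterlim_double_at_right_0: "filterlim (\<lambda>r::real. 2 * r) (at_right 0) (at_right 0)"
  unfolding filterlim_at
  by (auto intro!: tendsto_eq_intros simp: eventually_at_filter tendsto_mono[OF at_le])

lemma class_D1_double_le:
  assumes "\<sigma> \<in> class_D1" "0 < r" "2 * r \<le> 1"
  shows "\<sigma> (2 * r) \<le> 2 * \<sigma> r"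
proof -
  have "\<sigma> (2 * r) / (2 * r) \<le> \<sigma> r / r" using assms unfolding class_D1_def by auto
  then show ?thesis using assms(2) by (simp add: field_simps)
qed

lemma dini_at_zero_le_scaled:
  assumes "dini_at_zero g" "0 \<le> c" "\<forall>\<^sub>F r in at_right 0. \<bar>f r\<bar> \<le> c * \<bar>g r\<bar>"
  shows "dini_at_zero f"
proof -
  obtain C \<sigma> where \<sigma>: "\<sigma> \<in> class_D1" "\<forall>\<^sub>F r in at_right 0. \<bar>g r\<bar> \<le> C * \<sigma> r"
    using assms(1) unfolding dini_at_zero_def by blast
  have "\<forall>\<^sub>F r in at_right 0. \<bar>f r\<bar> \<le> (c * C) * \<sigma> r"
    using eventually_conj[OF assms(3) \<sigma>(2)]
    by (rule eventually_mono) (metis assms(2) mult.assoc mult_left_mono order_trans)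
  then show ?thesis unfolding dini_at_zero_def using \<sigma>(1) by blast
qed

lemma dini_at_zero_double:
  assumes "dini_at_zero g"
  shows "dini_at_zero (\<lambda>r. g (2 * r))"
proof -
  obtain C \<sigma> where \<sigma>: "\<sigma> \<in> class_D1" "\<forall>\<^sub>F r in at_right 0. \<bar>g r\<bar> \<le> C * \<sigma> r"
    using assms unfolding dini_at_zero_def by blast
  have small: "\<forall>\<^sub>F r in at_right 0. 0 < r \<and> 2 * r \<le> (1::real)"
    using eventually_at_right_real[of 0 "1 / 2"] by (auto elim!: eventually_mono)
  have "\<forall>\<^sub>F r in at_right 0. \<bar>g (2 * r)\<bar> \<le> (2 * max C 0) * \<sigma> r"
    using eventually_conj[OF eventually_compose_filterlim[OF \<sigma>(2) filterlim_double_at_right_0] small]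
  proof (rule eventually_mono)
    fix r :: real assume r: "\<bar>g (2 * r)\<bar> \<le> C * \<sigma> (2 * r) \<and> 0 < r \<and> 2 * r \<le> 1"
    have "0 \<le> \<sigma> (2 * r)" using \<sigma>(1) r unfolding class_D1_def by auto
    then have "\<bar>g (2 * r)\<bar> \<le> max C 0 * \<sigma> (2 * r)" using r by (metis max.cobounded1 mult_right_mono order_trans)
    also have "\<dots> \<le> max C 0 * (2 * \<sigma> r)" using class_D1_double_le[OF \<sigma>(1)] r by (simp add: mult_left_mono)
    finally show "\<bar>g (2 * r)\<bar> \<le> (2 * max C 0) * \<sigma> r" by simp
  qed
  then show ?thesis unfolding dini_at_zero_def using \<sigma>(1) by blast
qed

lemma tendsto_0_iff_doubling_comparable:
  fixes f g :: "real \<Rightarrow> real"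
  assumes "\<forall>\<^sub>F r in at_right 0. 0 \<le> g r \<and> g r \<le> f r \<and> f r \<le> 2 * g (2 * r)"
  shows "(f \<longlongrightarrow> 0) (at_right 0) \<longleftrightarrow> (g \<longlongrightarrow> 0) (at_right 0)"
proof
  assume "(f \<longlongrightarrow> 0) (at_right 0)"
  then show "(g \<longlongrightarrow> 0) (at_right 0)"
    by (rule tendsto_sandwich[rotated 2, OF tendsto_const]) (use assms in \<open>auto elim: eventually_mono\<close>)
next
  assume "(g \<longlongrightarrow> 0) (at_right 0)"
  then have "((\<lambda>r. 2 * g (2 * r)) \<longlongrightarrow> 0) (at_right 0)"
    using filterlim_compose[OF _ filterlim_double_at_right_0] tendsto_mult_right_zero by blast
  then show "(f \<longlongrightarrow> 0) (at_right 0)"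
    by (rule tendsto_sandwich[rotated 2, OF tendsto_const]) (use assms in \<open>auto elim: eventually_mono\<close>)
qed

lemma dini_at_zero_iff_doubling_comparable:
  assumes "\<forall>\<^sub>F r in at_right 0. 0 \<le> g r \<and> g r \<le> f r \<and> f r \<le> 2 * g (2 * r)"
  shows "dini_at_zero f \<longleftrightarrow> dini_at_zero g"
proof
  assume "dini_at_zero f"
  then show "dini_at_zero g"
    by (rule dini_at_zero_le_scaled[of _ 1]) (use assms in \<open>auto elim: eventually_mono\<close>)
next
  assume "dini_at_zero g"
  then show "dini_at_zero f"
    by (rule dini_at_zero_le_scaled[OF dini_at_zero_double, of _ 2])
      (use assms in \<open>auto elim: eventually_mono\<close>)
qed

theorem lemma2p1:
  fixes F :: "'a::euclidean_space \<Rightarrow> real" and R0 :: real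
  assumes "0 < R0" and "R0 \<le> 1"
    and "convex_on (cball 0 R0) F"
    and "\<forall>x\<in>cball 0 R0. 0 \<le> F x"
    and "F differentiable_on cball 0 R0"
    and "F 0 = 0"
  shows "((delta1 F \<longlongrightarrow> 0) (at_right 0) \<longleftrightarrow> (delta F \<longlongrightarrow> 0) (at_right 0))
       \<and> (dini_at_zero (delta1 F) \<longleftrightarrow> dini_at_zero (delta F))"
proof -
  interpret nonneg_convex_on_cball F R0
    using assms by unfold_locales auto
  have "\<forall>\<^sub>F r in at_right 0. 0 < r \<and> 2 * r \<le> R0"
    using eventually_at_right_real[of 0 "R0 / 2"] assms(1) by (auto elim!: eventually_mono)
  then have "\<forall>\<^sub>F r in at_right 0.
      0 \<le> delta F r \<and> delta F r \<le> delta1 F r \<and> delta1 F r \<le> 2 * delta F (2 * r)"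
    by (rule eventually_mono) (auto intro: delta_nonneg delta_le_delta1 delta1_le_delta)
  then show ?thesis
    by (simp add: tendsto_0_iff_doubling_comparable dini_at_zero_iff_doubling_comparable)
qed

end
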